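(* Let $\sigma(u)=(u+1)\,\omega(u+1)$ for $u\ge 0$, where $\omega$ is the Buchstab function. Then for every integer $n\ge 1$ and every real $y\in[0,1]$, $$\sigma(n-y)=\sigma(n)+\sum_{j=1}^{n-1}(-1)^j\,\sigma(n-j)\,M_{j,n}(y).$$
   Context: The Buchstab function $\omega:[1,\infty)\to\mathbb{R}$ is the continuous function with $u\,\omega(u)=1$ for $u\in[1,2]$ and $u\,\omega'(u)=\omega(u-1)-\omega(u)$ for $u>2$. For integers $n>j>0$ and real $y\in[0,1]$ define $$M_{j,n}(y)=\sum_{n_1>n_2>\cdots>n_j>0}\ \prod_{i=1}^{j}\frac{z_i^{n_i}}{n_i},\qquad z_1=\frac{y}{n},\quad z_i=\frac{n+2-i}{n+1-i}\ \text{for } 1<i\le j,$$ the sum running over integers $n_1,\dots,n_j$. *)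

theory Defs
  imports "HOL-Analysis.Analysis"
begin

text \<open>Defining properties of the Buchstab function on [1,oo): continuity,
  u w(u) = 1 on [1,2], and u w'(u) = w(u-1) - w(u) for u > 2.
  Outside [1,oo) the function is fixed to 0 only to make it unique as a total function.\<close>
definition buchstab_spec :: "(real \<Rightarrow> real) \<Rightarrow> bool" where
  "buchstab_spec w \<longleftrightarrow>
     continuous_on {1..} w \<and>
     (\<forall>u\<in>{1..2}. u * w u = 1) \<and>
     (\<forall>u>2. (w has_real_derivative ((w (u - 1) - w u) / u)) (at u)) \<and>
     (\<forall>u<1. w u = 0)"

definition buchstab :: "real \<Rightarrow> real" where
  "buchstab = (THE w. buchstab_spec w)"

definition sigma_b :: "real \<Rightarrow> real" where
  "sigma_b u = (u + 1) * buchstab (u + 1)"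

text \<open>The weights z_i (list index i is 0-based, i.e. paper index i+1).\<close>
definition Mz :: "nat \<Rightarrow> real \<Rightarrow> nat \<Rightarrow> real" where
  "Mz n y i = (if i = 0 then y / real n else (real n + 1 - real i) / (real n - real i))"

definition M :: "nat \<Rightarrow> nat \<Rightarrow> real \<Rightarrow> real" where
  "M j n y = infsum (\<lambda>ns. \<Prod>i<j. Mz n y i ^ (ns ! i) / real (ns ! i))
     {ns :: nat list. length ns = j \<and> sorted_wrt (>) ns \<and> (\<forall>k\<in>set ns. k > 0)}"

end

theory Submission
  imports Defs
begin

text \<open>For \<open>u > 1\<close> the delay equation of \<open>\<omega>\<close> becomes \<open>\<sigma>'(u) = \<sigma>(u - 1) / u\<close>, hence
  \<open>\<sigma>(m - y) = \<sigma>(m) - \<integral>\<^sub>0\<^sup>y \<sigma>(m - 1 - t) / (m - t) dt\<close>.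
  Expanding \<open>M\<^sub>j\<^sub>+\<^sub>1\<^sub>,\<^sub>m(y)\<close> as a power series in \<open>y\<close> (summing over \<open>n\<^sub>1\<close> last) and
  telescoping its termwise derivative gives \<open>(m - y) M'\<^sub>j\<^sub>+\<^sub>1\<^sub>,\<^sub>m(y) = M\<^sub>j\<^sub>,\<^sub>m\<^sub>-\<^sub>1(y)\<close>,
  so integrating the expansion of \<open>\<sigma>(m - 1 - t)\<close> against \<open>1 / (m - t)\<close> yields the expansion
  of \<open>\<sigma>(m - y)\<close>: induction on \<open>n\<close>. The Buchstab function itself is obtained from the
  Picard iteration of \<open>\<sigma>(u) = 1 + \<integral>\<^sub>1\<^sup>u \<sigma>(t - 1) / t dt\<close>, and its specification
  determines it uniquely, one unit interval at a time.\<close>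

section \<open>The Buchstab function\<close>

fun sigma_iter :: "nat \<Rightarrow> real \<Rightarrow> real" where
  "sigma_iter 0 u = 1"
| "sigma_iter (Suc k) u = 1 + integral {1..u} (\<lambda>t. sigma_iter k (t - 1) / t)"

lemma continuous_on_sigma_iter: "continuous_on UNIV (sigma_iter k)"
proof (induction k)
  case 0
  then show ?case by simp
next
  case (Suc k)
  let ?g = "\<lambda>t. sigma_iter k (t - 1) / t"
  have "isCont (sigma_iter (Suc k)) u" for u
  proof -
    define b where "b = max 1 u + 1"
    have "continuous_on {1..b} ?g"
      by (intro continuous_intros continuous_on_compose2[OF Suc.IH]) auto
    then have "continuous_on {1..b} (\<lambda>x. integral {1..x} ?g)"
      by (intro indefinite_integral_continuous_1 integrable_continuous_real)
    then have "continuous_on {..b} (\<lambda>x. integral {1..max 1 x} ?g)"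
      by (rule continuous_on_compose2[where f = "\<lambda>x. max 1 x"])
        (auto intro!: continuous_intros simp: b_def)
    then have "continuous_on {..b} (\<lambda>x. 1 + integral {1..max 1 x} ?g)"
      by (intro continuous_intros)
    moreover have "1 + integral {1..max 1 x} ?g = sigma_iter (Suc k) x" for x
      by (cases "x \<le> 1") (auto simp: max_def)
    ultimately have "continuous_on {..b} (sigma_iter (Suc k))"
      by simp
    then show ?thesis
      by (rule continuous_on_interior) (auto simp: b_def)
  qed
  then show ?case
    by (intro continuous_at_imp_continuous_on ballI)
qed

lemma sigma_iter_Suc_eq: "u \<le> real k + 1 \<Longrightarrow> sigma_iter (Suc k) u = sigma_iter k u"
proof (induction k arbitrary: u)
  case 0
  then have "{1..u} = {} \<or> u = 1"
    by auto
  then show ?case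
    by auto
next
  case (Suc k)
  have "integral {1..u} (\<lambda>t. sigma_iter (Suc k) (t - 1) / t) =
        integral {1..u} (\<lambda>t. sigma_iter k (t - 1) / t)"
    by (rule integral_cong) (use Suc in auto)
  then show ?case
    by simp
qed

lemma sigma_iter_eq:
  assumes "u \<le> real k + 1" and "k \<le> m"
  shows "sigma_iter m u = sigma_iter k u"
  using assms(2)
proof (induction m rule: dec_induct)
  case (step m)
  then have "u \<le> real m + 1"
    using assms(1) by linarith
  then have "sigma_iter (Suc m) u = sigma_iter m u"
    by (rule sigma_iter_Suc_eq)
  from this step.IH show ?case
    by (rule trans)
qed simp

text \<open>The iterates stabilise on every half-line \<open>u \<le> k + 1\<close>, so this is their limit.\<close>
definition sigma_sol :: "real \<Rightarrow> real" where
  "sigma_sol u = sigma_iter (nat \<lceil>u\<rceil>) u"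

lemma sigma_sol_eq_iter:
  assumes "u \<le> real k + 1"
  shows "sigma_sol u = sigma_iter k u"
proof (cases "k \<le> nat \<lceil>u\<rceil>")
  case True
  then show ?thesis
    unfolding sigma_sol_def by (rule sigma_iter_eq[OF assms])
next
  case False
  have "u \<le> real (nat \<lceil>u\<rceil>) + 1"
    using real_nat_ceiling_ge[of u] by linarith
  with False show ?thesis
    unfolding sigma_sol_def by (intro sigma_iter_eq[symmetric]) auto
qed

lemma sigma_sol_eq_1: "u \<le> 1 \<Longrightarrow> sigma_sol u = 1"
  using sigma_sol_eq_iter[of u 0] by simp

lemma isCont_sigma_sol: "isCont sigma_sol u"
proof -
  define k where "k = nat \<lceil>u\<rceil>"
  have "isCont (sigma_iter k) u"
    using continuous_on_sigma_iter continuous_on_eq_continuous_at by blast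
  moreover have "eventually (\<lambda>x. sigma_sol x = sigma_iter k x) (nhds u)"
  proof (rule eventually_nhds_in_open[THEN eventually_mono])
    show "u \<in> {..<real k + 1}"
      using real_nat_ceiling_ge[of u] by (simp add: k_def)
  next
    fix x
    assume "x \<in> {..<real k + 1}"
    then show "sigma_sol x = sigma_iter k x"
      by (intro sigma_sol_eq_iter) simp
  qed simp
  ultimately show ?thesis
    using isCont_cong by blast
qed

lemma sigma_iter_Suc_has_derivative:
  assumes "x > 1"
  shows "(sigma_iter (Suc k) has_real_derivative sigma_iter k (x - 1) / x) (at x)"
proof -
  let ?g = "\<lambda>t. sigma_iter k (t - 1) / t"
  have "continuous_on {1..x+1} ?g"
    by (intro continuous_intros continuous_on_compose2[OF continuous_on_sigma_iter]) auto
  then have "((\<lambda>u. integral {1..u} ?g) has_real_derivative ?g x) (at x within {1..x+1})"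
    by (rule integral_has_real_derivative) (use assms in auto)
  moreover have "at x within {1..x+1} = at x"
    by (rule at_within_interior) (use assms in simp)
  ultimately have "((\<lambda>u. 1 + integral {1..u} ?g) has_real_derivative ?g x) (at x)"
    by (auto intro!: derivative_eq_intros)
  moreover have "sigma_iter (Suc k) = (\<lambda>u. 1 + integral {1..u} ?g)"
    by (rule ext) simp
  ultimately show ?thesis
    by simp
qed

lemma sigma_sol_has_derivative:
  assumes "x > 1"
  shows "(sigma_sol has_real_derivative sigma_sol (x - 1) / x) (at x)"
proof -
  define k where "k = nat \<lceil>x\<rceil>"
  have xk: "x < real k + 1"
    using real_nat_ceiling_ge[of x] by (simp add: k_def)
  then have "sigma_iter k (x - 1) = sigma_sol (x - 1)"
    using sigma_sol_eq_iter[of "x - 1" k] by simp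
  with sigma_iter_Suc_has_derivative[OF assms, of k]
  have "(sigma_iter (Suc k) has_real_derivative sigma_sol (x - 1) / x) (at x)"
    by simp
  then show ?thesis
  proof (rule has_field_derivative_transform_within_open)
    fix z
    assume "z \<in> {..<real k + 1}"
    then show "sigma_iter (Suc k) z = sigma_sol z"
      using sigma_sol_eq_iter[of z "Suc k"] by simp
  qed (use xk in auto)
qed

definition buchstab_sol :: "real \<Rightarrow> real" where
  "buchstab_sol v = (if v < 1 then 0 else sigma_sol (v - 1) / v)"

lemma buchstab_sol_has_derivative:
  assumes u: "u > 2"
  shows "(buchstab_sol has_real_derivative (buchstab_sol (u - 1) - buchstab_sol u) / u) (at u)"
proof -
  have "(sigma_sol has_real_derivative sigma_sol (u - 1 - 1) / (u - 1)) (at (u - 1))"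
    by (rule sigma_sol_has_derivative) (use u in simp)
  moreover have "((\<lambda>v. v - 1) has_real_derivative 1) (at u)"
    by (auto intro!: derivative_eq_intros)
  ultimately have "((\<lambda>v. sigma_sol (v - 1)) has_real_derivative
      sigma_sol (u - 1 - 1) / (u - 1) * 1) (at u)"
    by (rule DERIV_chain2)
  then have "((\<lambda>v. sigma_sol (v - 1) / v) has_real_derivative
          (sigma_sol (u - 1 - 1) / (u - 1) * 1 * u - sigma_sol (u - 1) * 1) / (u * u)) (at u)"
    by (rule DERIV_divide[OF _ DERIV_ident]) (use u in simp)
  moreover have "(sigma_sol (u - 1 - 1) / (u - 1) * 1 * u - sigma_sol (u - 1) * 1) / (u * u) =
      (buchstab_sol (u - 1) - buchstab_sol u) / u"
    using u by (simp add: buchstab_sol_def field_simps)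
  ultimately have "((\<lambda>v. sigma_sol (v - 1) / v) has_real_derivative
      (buchstab_sol (u - 1) - buchstab_sol u) / u) (at u)"
    by simp
  then show ?thesis
    by (rule has_field_derivative_transform_within_open[of _ _ _ "{1<..}"])
      (use u in \<open>auto simp: buchstab_sol_def\<close>)
qed

lemma buchstab_spec_buchstab_sol: "buchstab_spec buchstab_sol"
  unfolding buchstab_spec_def
proof (intro conjI ballI allI impI)
  have "continuous_on UNIV sigma_sol"
    by (intro continuous_at_imp_continuous_on ballI isCont_sigma_sol)
  then have "continuous_on {1..} (\<lambda>v. sigma_sol (v - 1) / v)"
    by (intro continuous_on_divide continuous_on_compose2[OF \<open>continuous_on UNIV sigma_sol\<close>]
        continuous_intros) auto
  then show "continuous_on {1..} buchstab_sol"
    by (rule continuous_on_eq) (simp add: buchstab_sol_def)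
next
  fix u :: real
  assume "u > 2"
  then show "(buchstab_sol has_real_derivative (buchstab_sol (u - 1) - buchstab_sol u) / u) (at u)"
    by (rule buchstab_sol_has_derivative)
qed (simp_all add: buchstab_sol_def sigma_sol_eq_1)

lemma buchstab_spec_has_derivative_mult:
  assumes "buchstab_spec w" and "u > 2"
  shows "((\<lambda>v. v * w v) has_real_derivative w (u - 1)) (at u)"
proof -
  have "(w has_real_derivative (w (u - 1) - w u) / u) (at u)"
    using assms by (simp add: buchstab_spec_def)
  then have "((\<lambda>v. v * w v) has_real_derivative w u + u * ((w (u - 1) - w u) / u)) (at u)"
    by (auto intro!: derivative_eq_intros)
  then show ?thesis
    using assms(2) by (simp add: field_simps)
qed

text \<open>On \<open>[a, a + 1]\<close> the function \<open>u (w\<^sub>1(u) - w\<^sub>2(u))\<close> has derivative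
  \<open>w\<^sub>1(u - 1) - w\<^sub>2(u - 1) = 0\<close>, so it keeps its value \<open>0\<close> at \<open>a\<close>.\<close>
lemma buchstab_spec_agree_extend:
  assumes w1: "buchstab_spec w1" and w2: "buchstab_spec w2" and "2 \<le> a"
    and agree: "\<forall>u\<in>{1..a}. w1 u = w2 u" and u: "u \<in> {1..a + 1}"
  shows "w1 u = w2 u"
proof (cases "u \<le> a")
  case True
  then show ?thesis
    using agree u by simp
next
  case False
  define d where "d u = u * w1 u - u * w2 u" for u
  have "d u = d a"
  proof (rule DERIV_isconst_end[of a u d])
    have "continuous_on {a..u} w1" "continuous_on {a..u} w2"
      using w1 w2 \<open>2 \<le> a\<close> by (auto simp: buchstab_spec_def intro: continuous_on_subset)
    then show "continuous_on {a..u} d"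
      unfolding d_def by (intro continuous_intros)
  next
    fix x
    assume x: "a < x" "x < u"
    have "(d has_real_derivative w1 (x - 1) - w2 (x - 1)) (at x)"
      unfolding d_def[abs_def]
      by (rule DERIV_diff; rule buchstab_spec_has_derivative_mult) (use w1 w2 x \<open>2 \<le> a\<close> in auto)
    moreover have "w1 (x - 1) = w2 (x - 1)"
      using agree x u \<open>2 \<le> a\<close> by simp
    ultimately show "(d has_real_derivative 0) (at x)"
      by simp
  qed (use False in simp)
  also have "d a = 0"
    using agree \<open>2 \<le> a\<close> by (simp add: d_def)
  finally have "u * (w1 u - w2 u) = 0"
    by (simp add: d_def right_diff_distrib)
  then show ?thesis
    using u by simp
qed

lemma buchstab_spec_agree_upto:
  assumes w1: "buchstab_spec w1" and w2: "buchstab_spec w2"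
  shows "\<forall>u\<in>{1..real k + 2}. w1 u = w2 u"
proof (induction k)
  case 0
  show ?case
  proof
    fix u
    assume u: "u \<in> {1..real 0 + 2}"
    then have "u * w1 u = u * w2 u"
      using w1 w2 by (simp add: buchstab_spec_def)
    with u show "w1 u = w2 u"
      by simp
  qed
next
  case (Suc k)
  then show ?case
    using buchstab_spec_agree_extend[OF w1 w2, of "real k + 2"] by (simp add: add.assoc)
qed

lemma buchstab_spec_unique:
  assumes "buchstab_spec w1" and "buchstab_spec w2"
  shows "w1 = w2"
proof
  fix u :: real
  show "w1 u = w2 u"
  proof (cases "u < 1")
    case True
    then show ?thesis
      using assms by (simp add: buchstab_spec_def)
  next
    case False
    obtain k :: nat where "u \<le> real k"
      using real_arch_simple by blast
    then show ?thesis
      using buchstab_spec_agree_upto[OF assms, of k] False by auto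
  qed
qed

lemma buchstab_eq_buchstab_sol: "buchstab = buchstab_sol"
  unfolding buchstab_def
  by (rule the_equality[of buchstab_spec, OF buchstab_spec_buchstab_sol])
    (rule buchstab_spec_unique[OF _ buchstab_spec_buchstab_sol])

lemma sigma_b_eq_sigma_sol: "u \<ge> 0 \<Longrightarrow> sigma_b u = sigma_sol u"
  by (simp add: sigma_b_def buchstab_eq_buchstab_sol buchstab_sol_def)

lemma sigma_b_eq_1:
  assumes "0 \<le> u" and "u \<le> 1"
  shows "sigma_b u = 1"
  using sigma_b_eq_sigma_sol[OF assms(1)] sigma_sol_eq_1[OF assms(2)] by simp

lemma continuous_on_sigma_b: "continuous_on {0..} sigma_b"
proof (rule continuous_on_eq)
  show "continuous_on {0..} sigma_sol"
    by (intro continuous_at_imp_continuous_on ballI isCont_sigma_sol)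
  show "sigma_sol u = sigma_b u" if "u \<in> {0..}" for u
    using sigma_b_eq_sigma_sol[of u] that by simp
qed

lemma sigma_b_has_derivative:
  assumes "x > 1"
  shows "(sigma_b has_real_derivative sigma_b (x - 1) / x) (at x)"
proof -
  have "sigma_sol (x - 1) = sigma_b (x - 1)"
    using sigma_b_eq_sigma_sol[of "x - 1"] assms by simp
  with sigma_sol_has_derivative[OF assms]
  have "(sigma_sol has_real_derivative sigma_b (x - 1) / x) (at x)"
    by simp
  then show ?thesis
  proof (rule has_field_derivative_transform_within_open)
    show "sigma_sol u = sigma_b u" if "u \<in> {0<..}" for u
      using sigma_b_eq_sigma_sol[of u] that by simp
  qed (use assms in auto)
qed

section \<open>Sums over decreasing tuples\<close>

definition dec_tuples :: "nat \<Rightarrow> nat list set" where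
  "dec_tuples j = {ns. length ns = j \<and> sorted_wrt (>) ns \<and> (\<forall>k\<in>set ns. k > 0)}"

definition dec_tuples_below :: "nat \<Rightarrow> nat \<Rightarrow> nat list set" where
  "dec_tuples_below j N = {ns \<in> dec_tuples j. \<forall>k\<in>set ns. k < N}"

definition tuple_term :: "(nat \<Rightarrow> real) \<Rightarrow> nat \<Rightarrow> nat list \<Rightarrow> real" where
  "tuple_term z j ns = (\<Prod>i<j. z i ^ (ns ! i) / real (ns ! i))"

fun trunc_sum :: "(nat \<Rightarrow> real) \<Rightarrow> nat \<Rightarrow> nat \<Rightarrow> real" where
  "trunc_sum z 0 N = 1"
| "trunc_sum z (Suc j) N = (\<Sum>k\<in>{1..<N}. z 0 ^ k / real k * trunc_sum (\<lambda>i. z (Suc i)) j k)"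

lemma M_eq_infsum_tuple_term: "M j n y = infsum (tuple_term (Mz n y) j) (dec_tuples j)"
  unfolding M_def tuple_term_def[abs_def] dec_tuples_def by simp

lemma M_zero: "M 0 n y = 1"
proof -
  have "dec_tuples 0 = {[]}"
    by (auto simp: dec_tuples_def)
  then show ?thesis
    by (simp add: M_eq_infsum_tuple_term tuple_term_def)
qed

lemma dec_tuples_below_0: "dec_tuples_below 0 N = {[]}"
  by (auto simp: dec_tuples_below_def dec_tuples_def)

lemma dec_tuples_below_Suc:
  "dec_tuples_below (Suc j) N = (\<Union>k\<in>{1..<N}. (#) k ` dec_tuples_below j k)"
proof (rule set_eqI)
  fix xs :: "nat list"
  show "xs \<in> dec_tuples_below (Suc j) N \<longleftrightarrow> xs \<in> (\<Union>k\<in>{1..<N}. (#) k ` dec_tuples_below j k)"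
  proof
    assume "xs \<in> dec_tuples_below (Suc j) N"
    then obtain k ts where xs: "xs = k # ts" and "length ts = j" "sorted_wrt (>) (k # ts)"
      "\<forall>x\<in>set (k # ts). x > 0" "\<forall>x\<in>set (k # ts). x < N"
      by (auto simp: dec_tuples_below_def dec_tuples_def length_Suc_conv)
    then have "ts \<in> dec_tuples_below j k" and "k \<in> {1..<N}"
      by (auto simp: dec_tuples_below_def dec_tuples_def)
    then show "xs \<in> (\<Union>k\<in>{1..<N}. (#) k ` dec_tuples_below j k)"
      using xs by blast
  next
    assume "xs \<in> (\<Union>k\<in>{1..<N}. (#) k ` dec_tuples_below j k)"
    then show "xs \<in> dec_tuples_below (Suc j) N"
      by (fastforce simp: dec_tuples_below_def dec_tuples_def intro: less_trans)
  qed
qed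

lemma finite_dec_tuples_below: "finite (dec_tuples_below j N)"
proof (rule finite_subset)
  show "dec_tuples_below j N \<subseteq> {xs. set xs \<subseteq> {..<N} \<and> length xs = j}"
    by (auto simp: dec_tuples_below_def dec_tuples_def)
qed (simp add: finite_lists_length_eq)

lemma tuple_term_Cons: "tuple_term z (Suc j) (k # ts) = z 0 ^ k / real k * tuple_term (\<lambda>i. z (Suc i)) j ts"
  unfolding tuple_term_def by (subst prod.lessThan_Suc_shift) simp

lemma tuple_term_nonneg: "(\<And>i. i < j \<Longrightarrow> 0 \<le> z i) \<Longrightarrow> 0 \<le> tuple_term z j ns"
  unfolding tuple_term_def by (intro prod_nonneg) auto

lemma trunc_sum_eq_sum: "trunc_sum z j N = sum (tuple_term z j) (dec_tuples_below j N)"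
proof (induction j arbitrary: z N)
  case 0
  then show ?case
    by (simp add: dec_tuples_below_0 tuple_term_def)
next
  case (Suc j)
  have "sum (tuple_term z (Suc j)) (dec_tuples_below (Suc j) N) =
        (\<Sum>k\<in>{1..<N}. sum (tuple_term z (Suc j)) ((#) k ` dec_tuples_below j k))"
    unfolding dec_tuples_below_Suc
    by (rule sum.UNION_disjoint) (auto simp: finite_dec_tuples_below)
  also have "\<dots> = (\<Sum>k\<in>{1..<N}. \<Sum>ts\<in>dec_tuples_below j k.
                    z 0 ^ k / real k * tuple_term (\<lambda>i. z (Suc i)) j ts)"
  proof (rule sum.cong[OF refl])
    fix k
    have "sum (tuple_term z (Suc j)) ((#) k ` dec_tuples_below j k) =
          sum (tuple_term z (Suc j) \<circ> (#) k) (dec_tuples_below j k)"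
      by (rule sum.reindex) (auto simp: inj_on_def)
    then show "sum (tuple_term z (Suc j)) ((#) k ` dec_tuples_below j k) =
        (\<Sum>ts\<in>dec_tuples_below j k. z 0 ^ k / real k * tuple_term (\<lambda>i. z (Suc i)) j ts)"
      by (simp add: tuple_term_Cons)
  qed
  also have "\<dots> = trunc_sum z (Suc j) N"
    by (simp add: Suc.IH sum_distrib_left)
  finally show ?case ..
qed

lemma trunc_sum_nonneg: "(\<And>i. i < j \<Longrightarrow> 0 \<le> z i) \<Longrightarrow> 0 \<le> trunc_sum z j N"
  unfolding trunc_sum_eq_sum by (intro sum_nonneg tuple_term_nonneg)

lemma trunc_sum_Suc_lessThan:
  "trunc_sum z (Suc j) K = (\<Sum>N<K. z 0 ^ N / real N * trunc_sum (\<lambda>i. z (Suc i)) j N)"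
proof -
  let ?f = "\<lambda>N. z 0 ^ N / real N * trunc_sum (\<lambda>i. z (Suc i)) j N"
  have "sum ?f {Suc 0..<K} = sum ?f {0..<K}"
    by (rule sum_shift_lb_Suc0_0_upt) simp
  then show ?thesis
    by (simp only: trunc_sum.simps One_nat_def atLeast0LessThan)
qed

lemma trunc_sum_bound:
  assumes "\<And>i. i < j \<Longrightarrow> 1 \<le> z i"
  shows "trunc_sum z j N \<le> real N ^ j * (\<Prod>i<j. z i) ^ N"
  using assms
proof (induction j arbitrary: z N)
  case 0
  then show ?case
    by simp
next
  case (Suc j)
  let ?z' = "\<lambda>i. z (Suc i)" and ?P = "\<Prod>i<j. z (Suc i)"
  have z0: "1 \<le> z 0" and P: "1 \<le> ?P"
    using Suc.prems by (auto intro: prod_ge_1)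
  have term_bound: "z 0 ^ k / real k * trunc_sum ?z' j k \<le> z 0 ^ N * (real N ^ j * ?P ^ N)"
    if k: "k \<in> {1..<N}" for k
  proof (rule mult_mono)
    have "z 0 ^ k / real k \<le> z 0 ^ k"
      using k z0 by (simp add: divide_le_eq)
    also have "\<dots> \<le> z 0 ^ N"
      using k z0 by (intro power_increasing) auto
    finally show "z 0 ^ k / real k \<le> z 0 ^ N" .
    have "trunc_sum ?z' j k \<le> real k ^ j * ?P ^ k"
      by (rule Suc.IH) (use Suc.prems in simp)
    also have "\<dots> \<le> real N ^ j * ?P ^ N"
      using k P by (intro mult_mono power_mono power_increasing) auto
    finally show "trunc_sum ?z' j k \<le> real N ^ j * ?P ^ N" .
    show "0 \<le> trunc_sum ?z' j k"
      by (rule trunc_sum_nonneg) (use Suc.prems in force)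
  qed (use z0 in simp)
  have "trunc_sum z (Suc j) N \<le> (\<Sum>k\<in>{1..<N}. z 0 ^ N * (real N ^ j * ?P ^ N))"
    unfolding trunc_sum.simps by (rule sum_mono) (rule term_bound)
  also have "\<dots> \<le> real N * (z 0 ^ N * (real N ^ j * ?P ^ N))"
    using z0 P by (simp add: mult_right_mono)
  also have "\<dots> = real N ^ Suc j * (\<Prod>i<Suc j. z i) ^ N"
    by (simp only: prod.lessThan_Suc_shift power_mult_distrib power_Suc) (simp add: ac_simps)
  finally show ?case .
qed

lemma infsum_tuple_term_Suc:
  fixes z :: "nat \<Rightarrow> real" and j :: nat
  defines "a \<equiv> \<lambda>N. z 0 ^ N / real N * trunc_sum (\<lambda>i. z (Suc i)) j N"
  assumes nonneg: "\<And>i. i < Suc j \<Longrightarrow> 0 \<le> z i" and "summable a"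
  shows "infsum (tuple_term z (Suc j)) (dec_tuples (Suc j)) = (\<Sum>N. a N)"
proof -
  let ?f = "tuple_term z (Suc j)"
  have f_nonneg: "0 \<le> ?f ns" for ns
    using nonneg by (rule tuple_term_nonneg)
  have a_nonneg: "0 \<le> a N" for N
    unfolding a_def using nonneg by (intro mult_nonneg_nonneg trunc_sum_nonneg) auto
  have partial: "sum ?f (dec_tuples_below (Suc j) K) = (\<Sum>N<K. a N)" for K
    unfolding a_def trunc_sum_eq_sum[symmetric] by (rule trunc_sum_Suc_lessThan)
  have finite_le: "sum ?f F \<le> (\<Sum>N. a N)" if F: "finite F" "F \<subseteq> dec_tuples (Suc j)" for F
  proof -
    obtain K where K: "\<Union> (set ` F) \<subseteq> {..<K}"
      using F finite_nat_bounded[of "\<Union> (set ` F)"] by auto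
    then have "F \<subseteq> dec_tuples_below (Suc j) K"
      using F by (auto simp: dec_tuples_below_def)
    then have "sum ?f F \<le> sum ?f (dec_tuples_below (Suc j) K)"
      by (intro sum_mono2 finite_dec_tuples_below f_nonneg)
    also have "\<dots> \<le> (\<Sum>N. a N)"
      unfolding partial using \<open>summable a\<close> a_nonneg by (intro sum_le_suminf) auto
    finally show ?thesis .
  qed
  have summable_on: "?f summable_on dec_tuples (Suc j)"
    by (rule nonneg_bdd_above_summable_on) (auto intro: f_nonneg bdd_aboveI finite_le)
  have "infsum ?f (dec_tuples (Suc j)) \<le> (\<Sum>N. a N)"
    by (rule infsum_le_finite_sums[OF summable_on finite_le])
  moreover have "(\<Sum>N. a N) \<le> infsum ?f (dec_tuples (Suc j))"
  proof (rule suminf_le_const[OF \<open>summable a\<close>])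
    fix K
    have "(\<Sum>N<K. a N) = infsum ?f (dec_tuples_below (Suc j) K)"
      by (simp add: partial finite_dec_tuples_below)
    also have "\<dots> \<le> infsum ?f (dec_tuples (Suc j))"
      by (rule infsum_mono_neutral)
        (use summable_on f_nonneg finite_dec_tuples_below in \<open>auto simp: dec_tuples_below_def\<close>)
    finally show "(\<Sum>N<K. a N) \<le> infsum ?f (dec_tuples (Suc j))" .
  qed
  ultimately show ?thesis
    by linarith
qed

section \<open>The power series of \<open>M\<close>\<close>

text \<open>\<open>M_weight n i\<close> is the weight \<open>z\<^sub>i\<^sub>+\<^sub>2\<close> of \<open>M\<^sub>j\<^sub>,\<^sub>n\<close>; unlike \<open>z\<^sub>1\<close> it does not depend on \<open>y\<close>.\<close>
definition M_weight :: "nat \<Rightarrow> nat \<Rightarrow> real" where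
  "M_weight n i = (real n - real i) / (real n - 1 - real i)"

lemma Mz_0: "Mz n y 0 = y / real n"
  by (simp add: Mz_def)

lemma Mz_Suc: "Mz n y (Suc i) = M_weight n i"
  by (simp add: Mz_def M_weight_def algebra_simps)

lemma M_weight_ge_1: "Suc i < n \<Longrightarrow> 1 \<le> M_weight n i"
  by (simp add: M_weight_def le_divide_eq)

lemma prod_M_weight: "j < n \<Longrightarrow> (\<Prod>i<j. M_weight n i) = real n / (real n - real j)"
proof (induction j)
  case (Suc j)
  then have "real n - real j - 1 > 0"
    by linarith
  with Suc show ?case
    by (simp add: M_weight_def field_simps)
qed simp

lemma M_weight_Suc: "1 \<le> n \<Longrightarrow> M_weight n (Suc i) = M_weight (n - 1) i"
  by (simp add: M_weight_def of_nat_diff algebra_simps)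

text \<open>\<open>M_coeff j n N\<close> is the coefficient of \<open>y\<^sup>N\<close> in \<open>M\<^sub>j\<^sub>+\<^sub>1\<^sub>,\<^sub>n(y)\<close>.\<close>
definition M_coeff :: "nat \<Rightarrow> nat \<Rightarrow> nat \<Rightarrow> real" where
  "M_coeff j n N = (1 / real n) ^ N / real N * trunc_sum (M_weight n) j N"

lemma M_coeff_0: "M_coeff j n 0 = 0"
  by (simp add: M_coeff_def)

lemma summable_real_power_mult: "\<bar>x\<bar> < 1 \<Longrightarrow> summable (\<lambda>N. real N ^ j * x ^ N)"
proof (induction j arbitrary: x)
  case 0
  then show ?case
    by (simp add: summable_geometric)
next
  case (Suc j)
  have "summable (\<lambda>N. diffs (\<lambda>N. real N ^ j) N * \<bar>x\<bar> ^ N)"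
    by (rule termdiff_converges[where K = 1]) (use Suc in auto)
  then have "summable (\<lambda>N. real (Suc N) ^ Suc j * \<bar>x\<bar> ^ N)"
    by (simp add: diffs_def)
  then show ?case
  proof (rule summable_comparison_test')
    fix N :: nat
    have "real N ^ Suc j \<le> real (Suc N) ^ Suc j"
      by (rule power_mono) auto
    then show "norm (real N ^ Suc j * x ^ N) \<le> real (Suc N) ^ Suc j * \<bar>x\<bar> ^ N"
      by (simp add: abs_mult power_abs mult_right_mono del: of_nat_Suc power_Suc)
  qed
qed

lemma summable_M_coeff:
  assumes "j < n" and "\<bar>x\<bar> < real n - real j"
  shows "summable (\<lambda>N. M_coeff j n N * x ^ N)"
proof -
  define r where "r = \<bar>x\<bar> / (real n - real j)"
  have r: "0 \<le> r" "r < 1"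
    using assms by (auto simp: r_def)
  show ?thesis
  proof (rule summable_comparison_test'[OF summable_real_power_mult[of r j]])
    fix N :: nat
    have weights: "1 \<le> M_weight n i" if "i < j" for i
      using that assms(1) by (intro M_weight_ge_1) simp
    have T: "0 \<le> trunc_sum (M_weight n) j N"
            "trunc_sum (M_weight n) j N \<le> real N ^ j * (real n / (real n - real j)) ^ N"
      using weights trunc_sum_bound[of j "M_weight n" N] assms(1)
      by (auto simp: prod_M_weight intro: trunc_sum_nonneg order.trans[OF zero_le_one])
    have "(1 / real n) ^ N / real N \<le> (1 / real n) ^ N"
      using mult_left_mono[of 1 "real N" "(1 / real n) ^ N"] by (cases "N = 0") (auto simp: divide_le_eq)
    then have "norm (M_coeff j n N * x ^ N) \<le>
        (1 / real n) ^ N * (real N ^ j * (real n / (real n - real j)) ^ N) * \<bar>x\<bar> ^ N"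
      unfolding M_coeff_def norm_mult norm_power real_norm_def abs_mult abs_of_nonneg[OF T(1)]
      using T by (intro mult_mono) (auto simp: abs_divide power_abs)
    also have "\<dots> = real N ^ j * r ^ N"
      using assms by (simp add: r_def power_mult_distrib[symmetric] field_simps)
    finally show "norm (M_coeff j n N * x ^ N) \<le> real N ^ j * r ^ N" .
  qed (use r in auto)
qed

lemma M_Suc_eq_suminf:
  assumes "0 \<le> y" and "y \<le> 1" and "Suc j < n"
  shows "M (Suc j) n y = (\<Sum>N. M_coeff j n N * y ^ N)"
proof -
  have coeff: "(\<lambda>N. Mz n y 0 ^ N / real N * trunc_sum (\<lambda>i. Mz n y (Suc i)) j N) =
      (\<lambda>N. M_coeff j n N * y ^ N)"
    by (simp add: Mz_0 Mz_Suc M_coeff_def power_divide mult.commute)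
  have "M (Suc j) n y = infsum (tuple_term (Mz n y) (Suc j)) (dec_tuples (Suc j))"
    by (rule M_eq_infsum_tuple_term)
  also have "\<dots> = (\<Sum>N. Mz n y 0 ^ N / real N * trunc_sum (\<lambda>i. Mz n y (Suc i)) j N)"
  proof (rule infsum_tuple_term_Suc)
    show "0 \<le> Mz n y i" if "i < Suc j" for i
      using assms that by (cases i) (auto simp: Mz_0 Mz_Suc intro: order.trans[OF _ M_weight_ge_1])
    show "summable (\<lambda>N. Mz n y 0 ^ N / real N * trunc_sum (\<lambda>i. Mz n y (Suc i)) j N)"
      unfolding coeff using assms by (intro summable_M_coeff) auto
  qed
  finally show ?thesis
    by (simp only: coeff)
qed

lemma suminf_shift_times_linear:
  fixes r x :: real and T :: "nat \<Rightarrow> real"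
  assumes "r \<noteq> 0" and summable: "summable (\<lambda>N. r ^ Suc N * T (Suc N) * x ^ N)"
  shows "(\<Sum>N. r ^ Suc N * T (Suc N) * x ^ N) * (1 / r - x) =
           (\<Sum>N. r ^ N * (T (Suc N) - T N) * x ^ N) + T 0"
proof -
  define b where "b N = r ^ Suc N * T (Suc N) * x ^ N" for N
  define g where "g N = r ^ N * T N * x ^ N" for N
  have g_Suc: "g (Suc N) = x * b N" for N
    by (simp add: g_def b_def)
  have b_div: "b N / r = r ^ N * T (Suc N) * x ^ N" for N
    using assms(1) by (simp add: b_def)
  have sb: "summable b"
    using summable by (simp add: b_def[abs_def])
  then have "summable (\<lambda>N. g (Suc N))"
    unfolding g_Suc by (rule summable_mult)
  then have sg: "summable g"
    by (simp only: summable_Suc_iff)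
  have "suminf b * (1 / r - x) = (\<Sum>N. b N / r) - (\<Sum>N. x * b N)"
    using sb by (simp add: suminf_divide suminf_mult algebra_simps)
  also have "(\<Sum>N. x * b N) = suminf g - g 0"
    using suminf_split_head[OF sg] by (simp add: g_Suc)
  also have "(\<Sum>N. b N / r) - (suminf g - g 0) = (\<Sum>N. b N / r - g N) + g 0"
    using suminf_diff[OF summable_divide[OF sb] sg] by simp
  also have "(\<lambda>N. b N / r - g N) = (\<lambda>N. r ^ N * (T (Suc N) - T N) * x ^ N)"
    by (simp add: b_div g_def algebra_simps)
  finally show ?thesis
    by (simp add: b_def g_def)
qed

lemma trunc_sum_M_weight_diff:
  assumes "1 < n"
  shows "(1 / real n) ^ N * (trunc_sum (M_weight n) (Suc j) (Suc N) - trunc_sum (M_weight n) (Suc j) N)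
           = M_coeff j (n - 1) N"
proof -
  have "trunc_sum (M_weight n) (Suc j) (Suc N) - trunc_sum (M_weight n) (Suc j) N =
      M_weight n 0 ^ N / real N * trunc_sum (M_weight (n - 1)) j N"
    using assms by (simp add: trunc_sum_Suc_lessThan M_weight_Suc)
  moreover have "(1 / real n) ^ N * M_weight n 0 ^ N = (1 / real (n - 1)) ^ N"
    using assms by (simp add: M_weight_def power_mult_distrib[symmetric] of_nat_diff)
  ultimately show ?thesis
    by (simp add: M_coeff_def)
qed

lemma M_derivative_mult:
  assumes "Suc j < n" and "0 \<le> x" and "x \<le> 1"
  shows "(\<Sum>N. diffs (M_coeff j n) N * x ^ N) * (real n - x) = M j (n - 1) x"
proof -
  define T where "T = trunc_sum (M_weight n) j"
  have n: "real n > 1"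
    using assms(1) by simp
  have diffs: "diffs (M_coeff j n) N * x ^ N = (1 / real n) ^ Suc N * T (Suc N) * x ^ N" for N
    by (simp add: diffs_def M_coeff_def T_def del: of_nat_Suc power_Suc)
  have "summable (\<lambda>N. diffs (M_coeff j n) N * x ^ N)"
    using assms summable_M_coeff[of j n] by (intro termdiff_converges[where K = "3/2"]) auto
  then have "(\<Sum>N. diffs (M_coeff j n) N * x ^ N) * (real n - x) =
      (\<Sum>N. (1 / real n) ^ N * (T (Suc N) - T N) * x ^ N) + T 0"
    using suminf_shift_times_linear[of "1 / real n" T x] n by (simp add: diffs)
  also have "\<dots> = M j (n - 1) x"
  proof (cases j)
    case 0
    then show ?thesis
      by (simp add: T_def M_zero)
  next
    case (Suc j')
    have "(1 / real n) ^ N * (T (Suc N) - T N) = M_coeff j' (n - 1) N" for N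
      unfolding T_def Suc by (rule trunc_sum_M_weight_diff) (use assms in simp)
    moreover have "M j (n - 1) x = (\<Sum>N. M_coeff j' (n - 1) N * x ^ N)"
      unfolding Suc by (rule M_Suc_eq_suminf) (use assms Suc in auto)
    ultimately show ?thesis
      by (simp add: T_def Suc)
  qed
  finally show ?thesis .
qed

lemma has_integral_M_Suc:
  assumes "Suc j < m" and "0 \<le> y" and "y \<le> 1"
  shows "((\<lambda>t. M j (m - 1) t / (real m - t)) has_integral M (Suc j) m y) {0..y}"
proof -
  define P where "P x = (\<Sum>N. M_coeff j m N * x ^ N)" for x
  define P' where "P' x = (\<Sum>N. diffs (M_coeff j m) N * x ^ N)" for x
  have D: "(P has_real_derivative P' t) (at t)" if "\<bar>t\<bar> < 3/2" for t
    unfolding P_def[abs_def] P'_def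
    using assms summable_M_coeff[of j m] that by (intro termdiffs_strong[where K = "3/2"]) auto
  have "continuous_on {0..y} P"
    by (intro continuous_at_imp_continuous_on ballI DERIV_isCont[OF D]) (use assms in auto)
  then have "(P' has_integral P y - P 0) {0..y}"
    by (rule fundamental_theorem_of_calculus_interior[OF assms(2)])
      (use assms D in \<open>auto simp: has_real_derivative_iff_has_vector_derivative[symmetric]\<close>)
  moreover have "P y = M (Suc j) m y"
    unfolding P_def by (rule M_Suc_eq_suminf[symmetric]) (use assms in auto)
  ultimately have "(P' has_integral M (Suc j) m y) {0..y}"
    by (simp add: P_def M_coeff_0)
  then show ?thesis
  proof (rule has_integral_eq[rotated])
    fix t
    assume t: "t \<in> {0..y}"
    then have "P' t * (real m - t) = M j (m - 1) t"
      unfolding P'_def by (intro M_derivative_mult) (use assms in auto)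
    moreover have "real m - t > 0"
      using assms t by auto
    ultimately show "P' t = M j (m - 1) t / (real m - t)"
      by (simp add: field_simps)
  qed
qed

section \<open>The expansion of \<open>\<sigma>\<close>\<close>

lemma has_integral_sigma_b:
  assumes "real m \<ge> 2" and "0 \<le> y" and "y \<le> 1"
  shows "((\<lambda>t. sigma_b (real m - 1 - t) / (real m - t)) has_integral
            sigma_b (real m) - sigma_b (real m - y)) {0..y}"
proof -
  define f where "f t = sigma_b (real m - t)" for t
  have "continuous_on {0..y} f"
    unfolding f_def using assms
    by (intro continuous_on_compose2[OF continuous_on_sigma_b] continuous_intros) auto
  moreover have "(f has_vector_derivative - (sigma_b (real m - 1 - t) / (real m - t))) (at t)"
    if "t \<in> {0<..<y}" for t
  proof -
    have "real m - t > 1"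
      using assms that by auto
    moreover have "((\<lambda>t. real m - t) has_real_derivative - 1) (at t)"
      by (auto intro!: derivative_eq_intros)
    ultimately have "(f has_real_derivative sigma_b (real m - t - 1) / (real m - t) * - 1) (at t)"
      unfolding f_def[abs_def] by (rule DERIV_chain2[OF sigma_b_has_derivative])
    then have "(f has_real_derivative - (sigma_b (real m - 1 - t) / (real m - t))) (at t)"
      by (simp add: algebra_simps)
    then show ?thesis
      by (simp add: has_real_derivative_iff_has_vector_derivative)
  qed
  ultimately have "((\<lambda>t. - (sigma_b (real m - 1 - t) / (real m - t))) has_integral f y - f 0) {0..y}"
    by (rule fundamental_theorem_of_calculus_interior[OF assms(2)])
  from has_integral_neg[OF this] show ?thesis
    by (simp add: f_def)
qed

lemma sigma_b_expansion:
  assumes "1 \<le> n" and "0 \<le> y" and "y \<le> 1"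
  shows "sigma_b (real n - y) = (\<Sum>j<n. (-1) ^ j * sigma_b (real n - real j) * M j n y)"
  using assms(1,2,3)
proof (induction n arbitrary: y rule: dec_induct)
  case base
  then show ?case
    by (simp add: sigma_b_eq_1 M_zero)
next
  case (step n)
  define c where "c j = (-1) ^ j * sigma_b (real n - real j)" for j
  have "((\<lambda>t. sigma_b (real (Suc n) - 1 - t) / (real (Suc n) - t)) has_integral
        (\<Sum>j<n. c j * M (Suc j) (Suc n) y)) {0..y}"
  proof (rule has_integral_eq[rotated])
    show "((\<lambda>t. \<Sum>j<n. c j * (M j n t / (real (Suc n) - t))) has_integral
        (\<Sum>j<n. c j * M (Suc j) (Suc n) y)) {0..y}"
      using has_integral_M_Suc[of _ "Suc n" y] step.prems
      by (intro has_integral_sum has_integral_mult_right) auto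
    show "(\<Sum>j<n. c j * (M j n t / (real (Suc n) - t))) =
          sigma_b (real (Suc n) - 1 - t) / (real (Suc n) - t)" if "t \<in> {0..y}" for t
      using step.IH[of t] that step.prems
      by (simp add: c_def sum_divide_distrib mult.assoc)
  qed
  with has_integral_sigma_b[of "Suc n" y] step.prems step.hyps
  have "sigma_b (real (Suc n) - y) = sigma_b (real (Suc n)) - (\<Sum>j<n. c j * M (Suc j) (Suc n) y)"
    by (auto dest: has_integral_unique)
  also have "\<dots> = (\<Sum>j<Suc n. (-1) ^ j * sigma_b (real (Suc n) - real j) * M j (Suc n) y)"
    by (subst sum.lessThan_Suc_shift) (simp add: M_zero c_def sum_negf)
  finally show ?case .
qed

theorem theorem2:
  fixes n :: nat and y :: real
  assumes "n \<ge> 1" and "0 \<le> y" and "y \<le> 1"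
  shows "sigma_b (real n - y) =
           sigma_b (real n) + (\<Sum>j=1..n-1. (-1) ^ j * sigma_b (real n - real j) * M j n y)"
proof -
  obtain k where k: "n = Suc k"
    using assms(1) by (cases n) auto
  have "sigma_b (real n - y) = (\<Sum>j<n. (-1) ^ j * sigma_b (real n - real j) * M j n y)"
    by (rule sigma_b_expansion[OF assms])
  also have "\<dots> = sigma_b (real n) + (\<Sum>j=1..n-1. (-1) ^ j * sigma_b (real n - real j) * M j n y)"
    unfolding k by (subst sum.lessThan_Suc_shift) (simp add: sum.atLeast1_atMost_eq M_zero)
  finally show ?thesis .
qed

end
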